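(* Let $\alpha:A^{\Delta}\to(H,V)\circ{\cal U}_1$ be a homomorphism, where $(H,V)$ is a finite forest algebra with $H$ idempotent and commutative, and let $\pi$ be the projection homomorphism from $(H,V)\circ{\cal U}_1$ onto $(H,V)$. If $\beta=\pi\alpha$ is nonconfusing, then $\alpha$ is nonconfusing.
   Context: $A^{\Delta}$: free forest algebra of forests and contexts over $A$. Forest algebra: additive monoid $H$, monoid $V$ acting faithfully on the left, containing $g\mapsto g+h$, $g\mapsto h+g$. Wreath product $(H_1,V_1)\circ(H_2,V_2)=(H_1\times H_2,V_1\times V_2^{H_1})$ with componentwise addition and $(v,f)(h_1,h_2)=(vh_1,f(h_1)h_2)$; $\pi(h_1,h_2)=h_1$, $\pi(v,f)=v$. ${\cal U}_1=(\{0,\infty\},\{1,0\})$ with $0+x=x$, $\infty+x=\infty$, $1$ the identity and $0$ the constant map to $\infty$. Reachability: $h\le h'$ iff $h=vh'$ for some $v$; classes of mutual reachability; $h>\Gamma$ means strictly above. For $\gamma$ and class $\Gamma$, $\gamma_\Gamma$ is the quotient identifying $\{h:h\not>\Gamma\}$ to one absorbing $\infty$; $s^{\gamma_\Gamma}$ relabels each node with subtree $at$ by $(a,\gamma_\Gamma(t))$. $\sim_k$ on forests over an alphabet $B$: $\sim_0$ total, $s\sim_{k+1}s'$ iff the sets $\{(b_i,[s_i]_{\sim_k})\}$ for $s=\sum b_is_i$, $s'=\sum b'_js'_j$ coincide. $s_1\equiv_{\gamma,k,\Gamma}s_2$ iff $(s_1)^{\gamma_\Gamma}\sim_k(s_2)^{\gamma_\Gamma}$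 and $\gamma(s_1),\gamma(s_2)\in\Gamma$. $\gamma$ is nonconfusing if there is $k>0$ such that for every reachability class $\Gamma$ of its target, $s_1\equiv_{\gamma,k,\Gamma}s_2$ implies $\gamma(s_1)=\gamma(s_2)$. *)

theory Defs
  imports Main "HOL-Library.FuncSet"
begin

datatype 'a tree = Node 'a "'a tree list"

type_synonym 'a forest = "'a tree list"

text \<open>A context is a forest with exactly one hole at a leaf:
  CHole l r is l + hole + r, and CNode l a c r is l + a(c) + r.\<close>
datatype 'a ctx = CHole "'a forest" "'a forest" | CNode "'a forest" 'a "'a ctx" "'a forest"

fun ctx_fill :: "'a ctx \<Rightarrow> 'a forest \<Rightarrow> 'a forest" where
  "ctx_fill (CHole l r) s = l @ s @ r"
| "ctx_fill (CNode l a c r) s = l @ [Node a (ctx_fill c s)] @ r"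

fun ctx_pad :: "'a forest \<Rightarrow> 'a forest \<Rightarrow> 'a ctx \<Rightarrow> 'a ctx" where
  "ctx_pad l r (CHole l' r') = CHole (l @ l') (r' @ r)"
| "ctx_pad l r (CNode l' a c r') = CNode (l @ l') a c (r' @ r)"

fun ctx_comp :: "'a ctx \<Rightarrow> 'a ctx \<Rightarrow> 'a ctx" where
  "ctx_comp (CHole l r) d = ctx_pad l r d"
| "ctx_comp (CNode l a c r) d = CNode l a (ctx_comp c d) r"

definition ctx_id :: "'a ctx" where "ctx_id = CHole [] []"

record ('h, 'v) falg =
  hcar :: "'h set"
  vcar :: "'v set"
  hadd :: "'h \<Rightarrow> 'h \<Rightarrow> 'h"
  hzero :: 'h
  vmul :: "'v \<Rightarrow> 'v \<Rightarrow> 'v"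
  vone :: 'v
  act :: "'v \<Rightarrow> 'h \<Rightarrow> 'h"

definition forest_algebra :: "('h, 'v) falg \<Rightarrow> bool" where
  "forest_algebra F \<longleftrightarrow>
     hzero F \<in> hcar F \<and>
     (\<forall>g\<in>hcar F. \<forall>h\<in>hcar F. hadd F g h \<in> hcar F) \<and>
     (\<forall>g\<in>hcar F. \<forall>h\<in>hcar F. \<forall>k\<in>hcar F. hadd F (hadd F g h) k = hadd F g (hadd F h k)) \<and>
     (\<forall>h\<in>hcar F. hadd F (hzero F) h = h \<and> hadd F h (hzero F) = h) \<and>
     vone F \<in> vcar F \<and>
     (\<forall>v\<in>vcar F. \<forall>w\<in>vcar F. vmul F v w \<in> vcar F) \<and>
     (\<forall>u\<in>vcar F. \<forall>v\<in>vcar F. \<forall>w\<in>vcar F. vmul F (vmul F u v) w = vmul F u (vmul F v w)) \<and>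
     (\<forall>v\<in>vcar F. vmul F (vone F) v = v \<and> vmul F v (vone F) = v) \<and>
     (\<forall>v\<in>vcar F. \<forall>h\<in>hcar F. act F v h \<in> hcar F) \<and>
     (\<forall>v\<in>vcar F. \<forall>w\<in>vcar F. \<forall>h\<in>hcar F. act F (vmul F v w) h = act F v (act F w h)) \<and>
     (\<forall>h\<in>hcar F. act F (vone F) h = h) \<and>
     (\<forall>v\<in>vcar F. \<forall>w\<in>vcar F. (\<forall>h\<in>hcar F. act F v h = act F w h) \<longrightarrow> v = w) \<and>
     (\<forall>h\<in>hcar F. \<exists>v\<in>vcar F. \<forall>g\<in>hcar F. act F v g = hadd F g h) \<and>
     (\<forall>h\<in>hcar F. \<exists>v\<in>vcar F. \<forall>g\<in>hcar F. act F v g = hadd F h g)"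

definition finite_falg :: "('h, 'v) falg \<Rightarrow> bool" where
  "finite_falg F \<longleftrightarrow> finite (hcar F) \<and> finite (vcar F)"

text \<open>A homomorphism from the free forest algebra A^Delta into F, given by its
  forest part aH and its context part aV.\<close>
definition free_hom :: "('h, 'v) falg \<Rightarrow> ('a forest \<Rightarrow> 'h) \<Rightarrow> ('a ctx \<Rightarrow> 'v) \<Rightarrow> bool" where
  "free_hom F aH aV \<longleftrightarrow>
     (\<forall>s. aH s \<in> hcar F) \<and> (\<forall>c. aV c \<in> vcar F) \<and>
     aH [] = hzero F \<and> (\<forall>s t. aH (s @ t) = hadd F (aH s) (aH t)) \<and>
     aV ctx_id = vone F \<and> (\<forall>c d. aV (ctx_comp c d) = vmul F (aV c) (aV d)) \<and>
     (\<forall>c s. aH (ctx_fill c s) = act F (aV c) (aH s))"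

text \<open>Wreath product (H1,V1) o (H2,V2) = (H1 x H2, V1 x V2^H1); functions H1 -> V2
  are represented extensionally (undefined outside H1).\<close>
definition wreath :: "('h1, 'v1) falg \<Rightarrow> ('h2, 'v2) falg \<Rightarrow> ('h1 \<times> 'h2, 'v1 \<times> ('h1 \<Rightarrow> 'v2)) falg" where
  "wreath F G = \<lparr> hcar = hcar F \<times> hcar G,
     vcar = vcar F \<times> (hcar F \<rightarrow>\<^sub>E vcar G),
     hadd = (\<lambda>(a, b) (c, d). (hadd F a c, hadd G b d)),
     hzero = (hzero F, hzero G),
     vmul = (\<lambda>(v, f) (w, g). (vmul F v w, \<lambda>h\<in>hcar F. vmul G (f (act F w h)) (g h))),
     vone = (vone F, \<lambda>h\<in>hcar F. vone G),
     act = (\<lambda>(v, f) (h1, h2). (act F v h1, act G (f h1) h2)) \<rparr>"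

datatype u1h = UZero | UInf
datatype u1v = UOne | UConst

fun u1_add :: "u1h \<Rightarrow> u1h \<Rightarrow> u1h" where
  "u1_add UZero x = x"
| "u1_add UInf x = UInf"

fun u1_act :: "u1v \<Rightarrow> u1h \<Rightarrow> u1h" where
  "u1_act UOne x = x"
| "u1_act UConst x = UInf"

fun u1_mul :: "u1v \<Rightarrow> u1v \<Rightarrow> u1v" where
  "u1_mul UOne w = w"
| "u1_mul UConst w = UConst"

definition U1 :: "(u1h, u1v) falg" where
  "U1 = \<lparr> hcar = UNIV, vcar = UNIV, hadd = u1_add, hzero = UZero,
          vmul = u1_mul, vone = UOne, act = u1_act \<rparr>"

definition reach :: "('h, 'v) falg \<Rightarrow> 'h \<Rightarrow> 'h \<Rightarrow> bool" where
  "reach F h h' \<longleftrightarrow> (\<exists>v\<in>vcar F. h = act F v h')"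

definition reach_class :: "('h, 'v) falg \<Rightarrow> 'h set \<Rightarrow> bool" where
  "reach_class F \<Gamma> \<longleftrightarrow> (\<exists>h\<in>hcar F. \<Gamma> = {h'\<in>hcar F. reach F h h' \<and> reach F h' h})"

definition above :: "('h, 'v) falg \<Rightarrow> 'h \<Rightarrow> 'h set \<Rightarrow> bool" where
  "above F h \<Gamma> \<longleftrightarrow> (\<exists>g\<in>\<Gamma>. reach F g h \<and> \<not> reach F h g)"

text \<open>gamma_Gamma: None plays the role of the absorbing element infinity.\<close>
definition quot_hom :: "('h, 'v) falg \<Rightarrow> ('a forest \<Rightarrow> 'h) \<Rightarrow> 'h set \<Rightarrow> 'a forest \<Rightarrow> 'h option" where
  "quot_hom F \<gamma> \<Gamma> t = (if above F (\<gamma> t) \<Gamma> then Some (\<gamma> t) else None)"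

fun relabel_tree :: "('a forest \<Rightarrow> 'c) \<Rightarrow> 'a tree \<Rightarrow> ('a \<times> 'c) tree" where
  "relabel_tree f (Node a t) = Node (a, f t) (map (relabel_tree f) t)"

definition relabel :: "('a forest \<Rightarrow> 'c) \<Rightarrow> 'a forest \<Rightarrow> ('a \<times> 'c) forest" where
  "relabel f s = map (relabel_tree f) s"

primrec sim :: "nat \<Rightarrow> 'b forest \<Rightarrow> 'b forest \<Rightarrow> bool" where
  "sim 0 s s' = True"
| "sim (Suc k) s s' =
     ({(b, {u. sim k t u}) | b t. Node b t \<in> set s} =
      {(b, {u. sim k t u}) | b t. Node b t \<in> set s'})"

definition equiv_k :: "('h, 'v) falg \<Rightarrow> ('a forest \<Rightarrow> 'h) \<Rightarrow> nat \<Rightarrow> 'h set \<Rightarrow> 'a forest \<Rightarrow> 'a forest \<Rightarrow> bool" where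
  "equiv_k F \<gamma> k \<Gamma> s1 s2 \<longleftrightarrow>
     sim k (relabel (quot_hom F \<gamma> \<Gamma>) s1) (relabel (quot_hom F \<gamma> \<Gamma>) s2) \<and>
     \<gamma> s1 \<in> \<Gamma> \<and> \<gamma> s2 \<in> \<Gamma>"

definition nonconfusing :: "('h, 'v) falg \<Rightarrow> ('a forest \<Rightarrow> 'h) \<Rightarrow> bool" where
  "nonconfusing F \<gamma> \<longleftrightarrow>
     (\<exists>k>0. \<forall>\<Gamma>. reach_class F \<Gamma> \<longrightarrow>
        (\<forall>s1 s2. equiv_k F \<gamma> k \<Gamma> s1 s2 \<longrightarrow> \<gamma> s1 = \<gamma> s2))"

end

theory Submission
  imports Defs
begin

text \<open>Every reachability class of the wreath product with U1 has the form \<Gamma> \<times> {x} for a class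
  \<Gamma> of F. If x = \<infinity>, the U1 component plays no role; if x = 0, every subforest of a forest with
  value in \<Gamma> \<times> {0} again has U1 component 0, since 0 is reachable only from 0. Either way the
  quotient label of a node under \<alpha> determines its quotient label under \<beta>, so level-k equivalence
  for \<alpha> and \<Gamma> \<times> {x} implies level-k equivalence for \<beta> and \<Gamma>. Nonconfusion of \<beta> then gives
  equal first components, and both second components are x.\<close>

lemma sim_refl: "sim k s s"
  by (induction k arbitrary: s) auto

lemma sim_trans: "sim k s t \<Longrightarrow> sim k t u \<Longrightarrow> sim k s u"
  by (induction k arbitrary: s t u) auto

lemma Node_in_map_map_tree:
  "Node b t' \<in> set (map (map_tree \<psi>) s) \<longleftrightarrow>
    (\<exists>a t. Node a t \<in> set s \<and> b = \<psi> a \<and> t' = map (map_tree \<psi>) t)"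
  by (auto simp: image_iff) (metis tree.exhaust tree.inject tree.map, metis tree.map)

lemma sim_map_tree:
  "sim k s s' \<Longrightarrow> sim k (map (map_tree \<psi>) s) (map (map_tree \<psi>) s')"
proof (induction k arbitrary: s s')
  case 0
  then show ?case by simp
next
  case (Suc k)
  txt \<open>The level-(k+1) signature of the mapped forest is the image of the original one under a
    map on sim-classes, well defined by the induction hypothesis.\<close>
  let ?M = "map (map_tree \<psi>)"
  let ?G = "\<lambda>(b, C). (\<psi> b, {u. \<exists>t\<in>C. sim k (?M t) u})"
  have class_image: "(\<exists>t'. sim k t t' \<and> sim k (?M t') u) \<longleftrightarrow> sim k (?M t) u" for t u
    using Suc.IH sim_refl sim_trans by blast
  have "{(b, {u. sim k t u}) | b t. Node b t \<in> set (?M s)}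
      = ?G ` {(b, {u. sim k t u}) | b t. Node b t \<in> set s}" for s
  proof (intro set_eqI iffI)
    fix p assume "p \<in> {(b, {u. sim k t u}) | b t. Node b t \<in> set (?M s)}"
    then obtain b t' where p: "p = (b, {u. sim k t' u})" and "Node b t' \<in> set (?M s)"
      by blast
    then obtain a t where "Node a t \<in> set s" "b = \<psi> a" "t' = ?M t"
      unfolding Node_in_map_map_tree by blast
    then show "p \<in> ?G ` {(b, {u. sim k t u}) | b t. Node b t \<in> set s}"
      unfolding p by (intro rev_image_eqI[of "(a, {u. sim k t u})"]) (auto simp: class_image)
  next
    fix p assume "p \<in> ?G ` {(b, {u. sim k t u}) | b t. Node b t \<in> set s}"
    then obtain a t where "Node a t \<in> set s" and p: "p = (\<psi> a, {u. sim k (?M t) u})"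
      by (auto simp: class_image)
    then have "Node (\<psi> a) (?M t) \<in> set (?M s)"
      unfolding Node_in_map_map_tree by blast
    then show "p \<in> {(b, {u. sim k t u}) | b t. Node b t \<in> set (?M s)}"
      unfolding p by blast
  qed
  with Suc.prems show ?case by simp
qed

lemma relabel_tree_map_label:
  assumes closed: "\<And>s a t. P s \<Longrightarrow> Node a t \<in> set s \<Longrightarrow> P t"
    and labels: "\<And>t. P t \<Longrightarrow> g t = \<psi> (f t)"
  shows "P s \<Longrightarrow> T \<in> set s \<Longrightarrow> relabel_tree g T = map_tree (apsnd \<psi>) (relabel_tree f T)"
proof (induction T arbitrary: s)
  case (Node a ts)
  then have "P ts" using closed by blast
  with Node.IH show ?case by (simp add: labels)
qed

lemma relabel_map_label:
  assumes "\<And>s a t. P s \<Longrightarrow> Node a t \<in> set s \<Longrightarrow> P t"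
    and "\<And>t. P t \<Longrightarrow> g t = \<psi> (f t)"
    and "P s"
  shows "relabel g s = map (map_tree (apsnd \<psi>)) (relabel f s)"
  using relabel_tree_map_label[of P g \<psi> f s, OF assms] by (simp add: relabel_def)

lemma wreath_simps:
  "hcar (wreath F G) = hcar F \<times> hcar G"
  "vcar (wreath F G) = vcar F \<times> (hcar F \<rightarrow>\<^sub>E vcar G)"
  "hadd (wreath F G) (a, b) (c, d) = (hadd F a c, hadd G b d)"
  "act (wreath F G) (v, f) (h1, h2) = (act F v h1, act G (f h1) h2)"
  by (simp_all add: wreath_def)

lemma U1_simps: "hcar U1 = UNIV" "vcar U1 = UNIV" "hadd U1 = u1_add" "act U1 = u1_act"
  by (simp_all add: U1_def)

lemma u1_add_eq_UZero: "u1_add x y = UZero \<longleftrightarrow> x = UZero \<and> y = UZero"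
  by (cases x) auto

lemma u1_act_eq_UZero: "u1_act v x = UZero \<longleftrightarrow> v = UOne \<and> x = UZero"
  by (cases v) auto

lemma free_hom_wreath_U1_child_UZero:
  assumes hom: "free_hom (wreath F U1) \<alpha>H \<alpha>V"
    and "Node a t \<in> set s" and "snd (\<alpha>H s) = UZero"
  shows "snd (\<alpha>H t) = UZero"
proof -
  obtain l r where s: "s = l @ [Node a t] @ r"
    using \<open>Node a t \<in> set s\<close> by (metis append_Cons append_Nil split_list)
  have snd_append: "snd (\<alpha>H (x @ y)) = u1_add (snd (\<alpha>H x)) (snd (\<alpha>H y))" for x y
    using hom by (cases "\<alpha>H x"; cases "\<alpha>H y") (simp add: free_hom_def wreath_simps U1_simps)
  have "snd (\<alpha>H [Node a t]) = UZero"
    using \<open>snd (\<alpha>H s) = UZero\<close> unfolding s snd_append by (simp add: u1_add_eq_UZero)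
  moreover have "\<alpha>H [Node a t] = act (wreath F U1) (\<alpha>V (CNode [] a (CHole [] []) [])) (\<alpha>H t)"
    using hom unfolding free_hom_def by (metis append_Nil append_Nil2 ctx_fill.simps)
  ultimately show ?thesis
    by (cases "\<alpha>V (CNode [] a (CHole [] []) [])"; cases "\<alpha>H t")
       (simp add: wreath_simps U1_simps u1_act_eq_UZero)
qed

lemma reach_wreath_U1:
  assumes "h1' \<in> hcar F"
  shows "reach (wreath F U1) (h1, h2) (h1', h2') \<longleftrightarrow> reach F h1 h1' \<and> (h2 = h2' \<or> h2 = UInf)"
proof
  assume "reach (wreath F U1) (h1, h2) (h1', h2')"
  then obtain v f where "v \<in> vcar F" "h1 = act F v h1'" "h2 = u1_act (f h1') h2'"
    unfolding reach_def by (auto simp: wreath_simps U1_simps)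
  then show "reach F h1 h1' \<and> (h2 = h2' \<or> h2 = UInf)"
    unfolding reach_def by (cases "f h1'") auto
next
  assume "reach F h1 h1' \<and> (h2 = h2' \<or> h2 = UInf)"
  then obtain v where v: "v \<in> vcar F" "h1 = act F v h1'" and h2: "h2 = h2' \<or> h2 = UInf"
    unfolding reach_def by auto
  define f where "f = (\<lambda>h\<in>hcar F. if h2 = h2' then UOne else UConst)"
  have "(v, f) \<in> vcar (wreath F U1)"
    using v(1) by (simp add: f_def wreath_simps U1_simps)
  moreover have "(h1, h2) = act (wreath F U1) (v, f) (h1', h2')"
    using v h2 assms by (auto simp: wreath_simps U1_simps f_def)
  ultimately show "reach (wreath F U1) (h1, h2) (h1', h2')"
    unfolding reach_def by blast
qed

lemma reach_class_wreath_U1: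
  assumes "reach_class (wreath F U1) \<Delta>"
  obtains \<Gamma> x where "reach_class F \<Gamma>" "\<Gamma> \<subseteq> hcar F" "\<Delta> = \<Gamma> \<times> {x}"
proof -
  obtain h1 h2 where h1: "h1 \<in> hcar F" and \<Delta>:
    "\<Delta> = {h'\<in>hcar (wreath F U1). reach (wreath F U1) (h1, h2) h' \<and> reach (wreath F U1) h' (h1, h2)}"
    using assms unfolding reach_class_def wreath_simps by auto
  define \<Gamma> where "\<Gamma> = {h'\<in>hcar F. reach F h1 h' \<and> reach F h' h1}"
  have "reach_class F \<Gamma>"
    unfolding reach_class_def \<Gamma>_def using h1 by blast
  moreover have "\<Delta> = \<Gamma> \<times> {h2}"
    using h1 by (auto simp: \<Delta> \<Gamma>_def wreath_simps U1_simps reach_wreath_U1)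
  ultimately show ?thesis
    using that \<Gamma>_def by blast
qed

lemma above_wreath_U1:
  assumes "\<Gamma> \<subseteq> hcar F" "h \<in> hcar (wreath F U1)"
    and "above F (fst h) \<Gamma>" and "x = UInf \<or> snd h = x"
  shows "above (wreath F U1) h (\<Gamma> \<times> {x})"
proof -
  obtain g where g: "g \<in> \<Gamma>" "reach F g (fst h)" "\<not> reach F (fst h) g"
    using assms(3) unfolding above_def by blast
  have "reach (wreath F U1) (g, x) h"
    using g(2) assms(2,4) reach_wreath_U1[of "fst h" F g x "snd h"]
    by (auto simp: wreath_simps mem_Times_iff)
  moreover have "\<not> reach (wreath F U1) h (g, x)"
    using g assms(1) reach_wreath_U1[of g F "fst h" "snd h" x] by (cases h) auto
  ultimately show ?thesis
    unfolding above_def using g(1) by blast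
qed

definition fst_label :: "('h, 'v) falg \<Rightarrow> 'h set \<Rightarrow> ('h \<times> 'u) option \<Rightarrow> 'h option" where
  "fst_label F \<Gamma> p = Option.bind p (\<lambda>q. if above F (fst q) \<Gamma> then Some (fst q) else None)"

lemma quot_hom_fst_wreath_U1:
  assumes "\<Gamma> \<subseteq> hcar F" "\<alpha>H t \<in> hcar (wreath F U1)" and "x = UInf \<or> snd (\<alpha>H t) = x"
  shows "quot_hom F (fst \<circ> \<alpha>H) \<Gamma> t = fst_label F \<Gamma> (quot_hom (wreath F U1) \<alpha>H (\<Gamma> \<times> {x}) t)"
  using above_wreath_U1[OF assms(1,2) _ assms(3)] by (simp add: quot_hom_def fst_label_def)

lemma equiv_k_wreath_U1_imp_equiv_k_fst:
  assumes hom: "free_hom (wreath F U1) \<alpha>H \<alpha>V"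
    and "reach_class (wreath F U1) \<Delta>" and eq: "equiv_k (wreath F U1) \<alpha>H k \<Delta> s1 s2"
  obtains \<Gamma> where "reach_class F \<Gamma>" "equiv_k F (fst \<circ> \<alpha>H) k \<Gamma> s1 s2"
    "snd (\<alpha>H s1) = snd (\<alpha>H s2)"
proof -
  obtain \<Gamma> x where \<Gamma>: "reach_class F \<Gamma>" "\<Gamma> \<subseteq> hcar F" and \<Delta>: "\<Delta> = \<Gamma> \<times> {x}"
    using reach_class_wreath_U1[OF assms(2)] by metis
  have in_\<Delta>: "fst (\<alpha>H s) \<in> \<Gamma> \<and> snd (\<alpha>H s) = x" if "s \<in> {s1, s2}" for s
    using eq that by (auto simp: equiv_k_def \<Delta> mem_Times_iff)
  let ?P = "\<lambda>t. x = UInf \<or> snd (\<alpha>H t) = x"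
  have closed: "?P t" if "?P s" "Node a t \<in> set s" for s a t
    using that free_hom_wreath_U1_child_UZero[OF hom] by (cases x) auto
  have labels: "quot_hom F (fst \<circ> \<alpha>H) \<Gamma> t = fst_label F \<Gamma> (quot_hom (wreath F U1) \<alpha>H \<Delta> t)"
    if "?P t" for t
    using quot_hom_fst_wreath_U1[of \<Gamma> F \<alpha>H t x] \<Gamma>(2) that hom by (simp add: free_hom_def \<Delta>)
  note relabel = relabel_map_label[of ?P "quot_hom F (fst \<circ> \<alpha>H) \<Gamma>" "fst_label F \<Gamma>"
      "quot_hom (wreath F U1) \<alpha>H \<Delta>", OF closed labels]
  have "sim k (relabel (quot_hom F (fst \<circ> \<alpha>H) \<Gamma>) s1) (relabel (quot_hom F (fst \<circ> \<alpha>H) \<Gamma>) s2)"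
    using eq in_\<Delta> by (simp add: equiv_k_def relabel sim_map_tree)
  then have "equiv_k F (fst \<circ> \<alpha>H) k \<Gamma> s1 s2"
    using in_\<Delta> by (simp add: equiv_k_def)
  with \<Gamma>(1) in_\<Delta> that show ?thesis
    by simp
qed

theorem lemma7:
  fixes F :: "('h, 'v) falg"
    and \<alpha>H :: "('a::finite) forest \<Rightarrow> 'h \<times> u1h"
    and \<alpha>V :: "'a ctx \<Rightarrow> 'v \<times> ('h \<Rightarrow> u1v)"
  assumes "forest_algebra F" and "finite_falg F"
    and "\<forall>h\<in>hcar F. hadd F h h = h"
    and "\<forall>g\<in>hcar F. \<forall>h\<in>hcar F. hadd F g h = hadd F h g"
    and "free_hom (wreath F U1) \<alpha>H \<alpha>V"
    and "nonconfusing F (fst \<circ> \<alpha>H)"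
  shows "nonconfusing (wreath F U1) \<alpha>H"
proof -
  obtain k where "k > 0" and \<beta>_nonconfusing:
    "\<And>\<Gamma> s1 s2. reach_class F \<Gamma> \<Longrightarrow> equiv_k F (fst \<circ> \<alpha>H) k \<Gamma> s1 s2 \<Longrightarrow> fst (\<alpha>H s1) = fst (\<alpha>H s2)"
    using assms(6) unfolding nonconfusing_def by auto
  have "\<alpha>H s1 = \<alpha>H s2"
    if "reach_class (wreath F U1) \<Delta>" "equiv_k (wreath F U1) \<alpha>H k \<Delta> s1 s2" for \<Delta> s1 s2
    using equiv_k_wreath_U1_imp_equiv_k_fst[OF assms(5) that] \<beta>_nonconfusing by (metis prod_eq_iff)
  with \<open>k > 0\<close> show ?thesis
    unfolding nonconfusing_def by blast
qed

end
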